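(* Let $X$ be a separable completely metrizable space and $T:X\to X$ continuous. Then $T$ is quasi-rigid if and only if $T$ is topologically quasi-rigid.
   Context: $T$ is quasi-rigid with respect to a strictly increasing sequence $(n_k)_{k\in\mathbb{N}}$ of positive integers if there is a dense subset $Y\subset X$ such that $T^{n_k}x\to x$ as $k\to\infty$ for every $x\in Y$; $T$ is quasi-rigid if this holds for some such sequence. $T$ is topologically quasi-rigid with respect to $(n_k)$ if for every non-empty open $U\subset X$ there is $k_U$ with $T^{n_k}(U)\cap U\neq\varnothing$ for all $k\geq k_U$; topologically quasi-rigid means this holds for some such sequence. *)

theory Defs
  imports "HOL-Analysis.Analysis"
begin

definition quasi_rigid_wrt :: "'a topology \<Rightarrow> ('a \<Rightarrow> 'a) \<Rightarrow> (nat \<Rightarrow> nat) \<Rightarrow> bool" where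
  "quasi_rigid_wrt X T n \<longleftrightarrow>
     (\<exists>Y. Y \<subseteq> topspace X \<and> X closure_of Y = topspace X \<and>
          (\<forall>x\<in>Y. limitin X (\<lambda>k. (T ^^ n k) x) x sequentially))"

definition quasi_rigid :: "'a topology \<Rightarrow> ('a \<Rightarrow> 'a) \<Rightarrow> bool" where
  "quasi_rigid X T \<longleftrightarrow>
     (\<exists>n. strict_mono n \<and> (\<forall>k. 0 < n k) \<and> quasi_rigid_wrt X T n)"

definition top_quasi_rigid_wrt :: "'a topology \<Rightarrow> ('a \<Rightarrow> 'a) \<Rightarrow> (nat \<Rightarrow> nat) \<Rightarrow> bool" where
  "top_quasi_rigid_wrt X T n \<longleftrightarrow>
     (\<forall>U. openin X U \<and> U \<noteq> {} \<longrightarrow>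
          (\<exists>kU. \<forall>k\<ge>kU. (T ^^ n k) ` U \<inter> U \<noteq> {}))"

definition top_quasi_rigid :: "'a topology \<Rightarrow> ('a \<Rightarrow> 'a) \<Rightarrow> bool" where
  "top_quasi_rigid X T \<longleftrightarrow>
     (\<exists>n. strict_mono n \<and> (\<forall>k. 0 < n k) \<and> top_quasi_rigid_wrt X T n)"

end

theory Submission
  imports Defs
begin

text \<open>A point of the dense set lying in a nonempty open set \<open>U\<close> eventually returns to \<open>U\<close>,
  so quasi-rigidity implies topological quasi-rigidity. Conversely, fix nonempty open sets
  \<open>U 0, U 1, \<dots>\<close> such that every nonempty open set contains one of them. Topological
  quasi-rigidity provides arbitrarily late times at which finitely many given open sets
  simultaneously meet their own images. Inductively, at stage \<open>k\<close> choose such a time \<open>n (i k)\<close>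
  and closed balls \<open>B k j \<subseteq> U j\<close> (\<open>j \<le> k\<close>) of radius at most \<open>1/(k+1)\<close>, each contained in the
  ball \<open>B (k-1) j\<close> of the previous stage and mapped into it by \<open>T ^^ n (i k)\<close>. Completeness
  yields points \<open>x j\<close> lying in every \<open>B k j\<close>; as \<open>x j\<close> and \<open>(T ^^ n (i k)) (x j)\<close> both lie in
  \<open>B (k-1) j\<close>, every \<open>x j\<close> is rigid along the one subsequence \<open>n \<circ> i\<close>, and the \<open>x j\<close> are dense.\<close>

lemma continuous_map_funpow:
  assumes "continuous_map X X T"
  shows "continuous_map X X (T ^^ m)"
  by (induction m) (simp_all add: continuous_map_compose[OF _ assms, unfolded o_def])

lemma top_quasi_rigid_wrt_iff_eventually:
  "top_quasi_rigid_wrt X T n \<longleftrightarrow>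
     (\<forall>U. openin X U \<and> U \<noteq> {} \<longrightarrow> eventually (\<lambda>k. (T ^^ n k) ` U \<inter> U \<noteq> {}) sequentially)"
  unfolding top_quasi_rigid_wrt_def eventually_sequentially ..

lemma quasi_rigid_wrt_imp_top_quasi_rigid_wrt:
  assumes "quasi_rigid_wrt X T n"
  shows "top_quasi_rigid_wrt X T n"
  unfolding top_quasi_rigid_wrt_iff_eventually
proof (intro allI impI)
  fix U assume U: "openin X U \<and> U \<noteq> {}"
  obtain Y where dense: "X closure_of Y = topspace X"
    and rigid: "\<forall>x\<in>Y. limitin X (\<lambda>k. (T ^^ n k) x) x sequentially"
    using assms unfolding quasi_rigid_wrt_def by blast
  obtain x where "x \<in> Y" "x \<in> U"
    using dense U unfolding dense_intersects_open by blast
  then have "eventually (\<lambda>k. (T ^^ n k) x \<in> U) sequentially"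
    using rigid U unfolding limitin_def by blast
  then show "eventually (\<lambda>k. (T ^^ n k) ` U \<inter> U \<noteq> {}) sequentially"
    by (rule eventually_mono) (use \<open>x \<in> U\<close> in blast)
qed

context Metric_space
begin

lemma obtain_returning_mcball:
  assumes "continuous_map mtopology mtopology S" "openin mtopology V" "S ` V \<inter> V \<noteq> {}" "\<epsilon> > 0"
  obtains c r where "c \<in> M" "0 < r" "r \<le> \<epsilon>" "mcball c r \<subseteq> V" "S ` mcball c r \<subseteq> V"
proof -
  obtain y where y: "y \<in> V" "S y \<in> V"
    using assms(3) by blast
  then have "y \<in> M"
    using assms(2) openin_subset by fastforce
  define W where "W = V \<inter> {x \<in> topspace mtopology. S x \<in> V}"
  have "openin mtopology W"
    unfolding W_def using assms(1,2) by (intro openin_Int openin_continuous_map_preimage)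
  moreover have "y \<in> W"
    unfolding W_def using y \<open>y \<in> M\<close> by simp
  ultimately obtain r where "0 < r" "mball y r \<subseteq> W"
    unfolding openin_mtopology by blast
  moreover have "mcball y (min (r/2) \<epsilon>) \<subseteq> mball y r"
    using \<open>0 < r\<close> by (intro mcball_subset_mball_concentric) simp
  ultimately show thesis
    using that[of y "min (r/2) \<epsilon>"] \<open>y \<in> M\<close> \<open>\<epsilon> > 0\<close> unfolding W_def by fastforce
qed

lemma obtain_simultaneously_returning_mcballs:
  fixes K N :: nat
  assumes cont: "continuous_map mtopology mtopology T"
    and tqr: "top_quasi_rigid_wrt mtopology T n"
    and V: "\<And>j. j < K \<Longrightarrow> openin mtopology (V j) \<and> V j \<noteq> {}"
    and "\<epsilon> > 0"
  obtains i c r where "N < i"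
    "\<And>j. j < K \<Longrightarrow> c j \<in> M \<and> 0 < r j \<and> r j \<le> \<epsilon> \<and>
       mcball (c j) (r j) \<subseteq> V j \<and> (T ^^ n i) ` mcball (c j) (r j) \<subseteq> V j"
proof -
  have "eventually (\<lambda>i. N < i \<and> (\<forall>j\<in>{..<K}. (T ^^ n i) ` V j \<inter> V j \<noteq> {})) sequentially"
    using tqr V unfolding top_quasi_rigid_wrt_iff_eventually
    by (intro eventually_conj eventually_gt_at_top eventually_ball_finite) auto
  then obtain i where "N < i" and returns: "\<And>j. j < K \<Longrightarrow> (T ^^ n i) ` V j \<inter> V j \<noteq> {}"
    unfolding eventually_sequentially by blast
  have "\<forall>j. \<exists>c r. j < K \<longrightarrow> c \<in> M \<and> 0 < r \<and> r \<le> \<epsilon> \<and>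
          mcball c r \<subseteq> V j \<and> (T ^^ n i) ` mcball c r \<subseteq> V j"
    using obtain_returning_mcball[OF continuous_map_funpow[OF cont]] V returns \<open>\<epsilon> > 0\<close> by metis
  then show thesis
    using that[OF \<open>N < i\<close>] by metis
qed

lemma mcomplete_nested_mcballs:
  assumes "mcomplete" "\<And>t. c t \<in> M" "\<And>t. 0 \<le> r t"
    and "decseq (\<lambda>t. mcball (c t) (r t))" "r \<longlonglongrightarrow> 0"
  obtains x where "\<And>t. x \<in> mcball (c t) (r t)"
proof -
  have "\<exists>t a. mcball (c t) (r t) \<subseteq> mcball a \<epsilon>" if \<epsilon>: "\<epsilon> > 0" for \<epsilon>
  proof -
    obtain t where "r t < \<epsilon>"
      using order_tendstoD(2)[OF assms(5) \<epsilon>] unfolding eventually_sequentially by blast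
    then show ?thesis
      by (meson less_eq_real_def mcball_subset_concentric)
  qed
  moreover have "c t \<in> mcball (c t) (r t)" for t
    using assms(2,3) by simp
  ultimately have "\<Inter> (range (\<lambda>t. mcball (c t) (r t))) \<noteq> {}"
    using assms(1)[unfolded mcomplete_nest, rule_format, of "\<lambda>t. mcball (c t) (r t)"] assms(4)
    by blast
  then show thesis
    using that by blast
qed

lemma obtain_nested_returning_mcballs:
  assumes cont: "continuous_map mtopology mtopology T"
    and tqr: "top_quasi_rigid_wrt mtopology T n"
    and U: "\<And>j. openin mtopology (U j) \<and> U j \<noteq> {}"
  obtains c r i where "strict_mono i"
    "\<And>k j. j \<le> k \<Longrightarrow> c k j \<in> M \<and> 0 < r k j \<and> r k j \<le> 1 / real (Suc k)"
    "\<And>j. mcball (c j j) (r j j) \<subseteq> U j"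
    "\<And>k j. j \<le> k \<Longrightarrow> mcball (c (Suc k) j) (r (Suc k) j) \<subseteq> mball (c k j) (r k j)"
    "\<And>k j. j \<le> k \<Longrightarrow>
       (T ^^ n (i (Suc k))) ` mcball (c (Suc k) j) (r (Suc k) j) \<subseteq> mball (c k j) (r k j)"
proof -
  define V where "V k c r j = (if j < k then mball (c j) (r j) else U j)"
    for k and c :: "nat \<Rightarrow> 'a" and r :: "nat \<Rightarrow> real" and j
  define P :: "nat \<Rightarrow> (nat \<Rightarrow> 'a) \<times> (nat \<Rightarrow> real) \<times> nat \<Rightarrow> bool"
    where "P k = (\<lambda>(c, r, i). \<forall>j<k. c j \<in> M \<and> 0 < r j \<and> r j \<le> 1 / k)" for k
  define Q :: "nat \<Rightarrow> (nat \<Rightarrow> 'a) \<times> (nat \<Rightarrow> real) \<times> nat \<Rightarrow> _ \<Rightarrow> bool"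
    where "Q k = (\<lambda>(c, r, i) (c', r', i'). i < i' \<and> (\<forall>j\<le>k.
             mcball (c' j) (r' j) \<subseteq> V k c r j \<and> (T ^^ n i') ` mcball (c' j) (r' j) \<subseteq> V k c r j))"
    for k
  have "\<exists>s'. P (Suc k) s' \<and> Q k s s'" if "P k s" for k s
  proof -
    obtain c r i where s: "s = (c, r, i)"
      by (cases s)
    have V_open: "openin mtopology (V k c r j) \<and> V k c r j \<noteq> {}" if "j < Suc k" for j
      using \<open>P k s\<close> U unfolding s P_def V_def by auto
    have "0 < 1 / real (Suc k)"
      by simp
    then obtain i' c' r' where "i < i'"
      "\<And>j. j < Suc k \<Longrightarrow> c' j \<in> M \<and> 0 < r' j \<and> r' j \<le> 1 / real (Suc k) \<and>
         mcball (c' j) (r' j) \<subseteq> V k c r j \<and> (T ^^ n i') ` mcball (c' j) (r' j) \<subseteq> V k c r j"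
      using obtain_simultaneously_returning_mcballs[where K="Suc k" and V="V k c r" and N=i,
          OF cont tqr V_open] by blast
    then show ?thesis
      unfolding P_def Q_def s by (intro exI[of _ "(c', r', i')"]) auto
  qed
  moreover have "\<exists>s. P 0 s"
    unfolding P_def by auto
  ultimately obtain f where f: "\<And>k. P k (f k) \<and> Q k (f k) (f (Suc k))"
    using dependent_nat_choice[of P Q] by blast
  define c where "c k = fst (f (Suc k))" for k
  define r where "r k = fst (snd (f (Suc k)))" for k
  define i where "i k = snd (snd (f (Suc k)))" for k
  have f_Suc: "f (Suc k) = (c k, r k, i k)" for k
    unfolding c_def r_def i_def by simp
  have P: "P (Suc k) (c k, r k, i k)" and Q: "Q (Suc k) (c k, r k, i k) (c (Suc k), r (Suc k), i (Suc k))"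
    and Q0: "Q k (f k) (c k, r k, i k)" for k
    using f[of "Suc k"] f[of k] by (simp_all only: f_Suc)
  show thesis
  proof (rule that)
    show "strict_mono i"
      using Q unfolding strict_mono_Suc_iff Q_def by simp
    show "c k j \<in> M \<and> 0 < r k j \<and> r k j \<le> 1 / real (Suc k)" if "j \<le> k" for k j
      using P[of k] that unfolding P_def by simp
    show "mcball (c j j) (r j j) \<subseteq> U j" for j
      using Q0[of j] unfolding Q_def V_def by (cases "f j") fastforce
    show "mcball (c (Suc k) j) (r (Suc k) j) \<subseteq> mball (c k j) (r k j)"
      "(T ^^ n (i (Suc k))) ` mcball (c (Suc k) j) (r (Suc k) j) \<subseteq> mball (c k j) (r k j)"
      if "j \<le> k" for k j
      using Q[of k] that unfolding Q_def V_def by (auto dest!: spec[of _ j])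
  qed
qed

lemma obtain_common_rigid_subsequence:
  fixes U :: "nat \<Rightarrow> 'a set"
  assumes "mcomplete"
    and cont: "continuous_map mtopology mtopology T"
    and tqr: "top_quasi_rigid_wrt mtopology T n"
    and U: "\<And>j. openin mtopology (U j) \<and> U j \<noteq> {}"
  obtains i x where "strict_mono i" "\<And>j. x j \<in> U j"
    "\<And>j. limitin mtopology (\<lambda>k. (T ^^ n (i k)) (x j)) (x j) sequentially"
proof -
  obtain c r i where "strict_mono i"
    and balls: "\<And>k j. j \<le> k \<Longrightarrow> c k j \<in> M \<and> 0 < r k j \<and> r k j \<le> 1 / real (Suc k)"
    and diagonal: "\<And>j. mcball (c j j) (r j j) \<subseteq> U j"
    and nested: "\<And>k j. j \<le> k \<Longrightarrow> mcball (c (Suc k) j) (r (Suc k) j) \<subseteq> mball (c k j) (r k j)"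
    and returns: "\<And>k j. j \<le> k \<Longrightarrow>
       (T ^^ n (i (Suc k))) ` mcball (c (Suc k) j) (r (Suc k) j) \<subseteq> mball (c k j) (r k j)"
    by (rule obtain_nested_returning_mcballs[where U=U, OF cont tqr U]) blast
  have "\<exists>x. \<forall>t. x \<in> mcball (c (j + t) j) (r (j + t) j)" for j
  proof -
    have centres: "c (j + t) j \<in> M" and radii: "0 \<le> r (j + t) j" for t
      using balls[of j "j + t"] by auto
    have "decseq (\<lambda>t. mcball (c (j + t) j) (r (j + t) j))"
    proof (rule decseq_SucI)
      fix t
      have "mcball (c (j + Suc t) j) (r (j + Suc t) j) \<subseteq> mball (c (j + t) j) (r (j + t) j)"
        using nested[of j "j + t"] by simp
      also have "\<dots> \<subseteq> mcball (c (j + t) j) (r (j + t) j)"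
        by (rule mball_subset_mcball)
      finally show "mcball (c (j + Suc t) j) (r (j + Suc t) j) \<subseteq> mcball (c (j + t) j) (r (j + t) j)" .
    qed
    moreover have "(\<lambda>t. r (j + t) j) \<longlonglongrightarrow> 0"
    proof (rule Lim_null_comparison[OF always_eventually LIMSEQ_inverse_real_of_nat], intro allI)
      fix t
      have "r (j + t) j \<le> 1 / real (Suc (j + t))"
        using balls[of j "j + t"] by simp
      also have "\<dots> \<le> 1 / real (Suc t)"
        by (intro divide_left_mono) auto
      finally show "norm (r (j + t) j) \<le> inverse (real (Suc t))"
        using radii[of t] by (simp add: inverse_eq_divide)
    qed
    ultimately obtain x where "\<And>t. x \<in> mcball (c (j + t) j) (r (j + t) j)"
      using mcomplete_nested_mcballs[where c="\<lambda>t. c (j + t) j" and r="\<lambda>t. r (j + t) j",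
          OF \<open>mcomplete\<close> centres radii] by blast
    then show ?thesis
      by blast
  qed
  then have "\<exists>x. \<forall>j t. x j \<in> mcball (c (j + t) j) (r (j + t) j)"
    by (rule choice[OF allI])
  then obtain x where x_tail: "\<And>j t. x j \<in> mcball (c (j + t) j) (r (j + t) j)"
    by blast
  have x: "x j \<in> mcball (c k j) (r k j)" if "j \<le> k" for j k
    using x_tail[of j "k - j"] that by simp
  show thesis
  proof (rule that)
    show "strict_mono (i \<circ> Suc)"
      using \<open>strict_mono i\<close> by (simp add: strict_mono_o strict_mono_Suc_iff)
    show "x j \<in> U j" for j
      using x[of j j] diagonal[of j] by blast
    show "limitin mtopology (\<lambda>k. (T ^^ n ((i \<circ> Suc) k)) (x j)) (x j) sequentially" for j
      unfolding limitin_metric_dist_null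
    proof (intro conjI)
      have close: "(T ^^ n (i (Suc k))) (x j) \<in> M \<and>
          d ((T ^^ n (i (Suc k))) (x j)) (x j) \<le> 2 * inverse (real (Suc k))" if "j \<le> k" for k
      proof -
        let ?y = "(T ^^ n (i (Suc k))) (x j)"
        have "?y \<in> mball (c k j) (r k j)"
          using returns[OF that] x[OF le_SucI[OF that]] by blast
        then have y: "?y \<in> M" "c k j \<in> M" "d (c k j) ?y < r k j"
          by auto
        have "x j \<in> mcball (c k j) (r k j)"
          using x that by blast
        then have "x j \<in> M" "d (c k j) (x j) \<le> r k j"
          by auto
        have "d ?y (x j) \<le> d ?y (c k j) + d (c k j) (x j)"
          using y \<open>x j \<in> M\<close> by (intro triangle)
        also have "\<dots> \<le> 2 * r k j"
          using y \<open>d (c k j) (x j) \<le> r k j\<close> commute[of ?y "c k j"] by linarith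
        also have "\<dots> \<le> 2 * inverse (real (Suc k))"
          using balls[OF that] by (simp add: inverse_eq_divide)
        finally show ?thesis
          using y by blast
      qed
      show "x j \<in> M"
        using x[of j j] by simp
      show "eventually (\<lambda>k. (T ^^ n ((i \<circ> Suc) k)) (x j) \<in> M) sequentially"
        using close by (intro eventually_sequentiallyI[of j]) simp
      show "((\<lambda>k. d ((T ^^ n ((i \<circ> Suc) k)) (x j)) (x j)) \<longlongrightarrow> 0) sequentially"
      proof (rule Lim_null_comparison[OF _ tendsto_mult_right_zero[OF LIMSEQ_inverse_real_of_nat]])
        show "eventually (\<lambda>k. norm (d ((T ^^ n ((i \<circ> Suc) k)) (x j)) (x j))
            \<le> 2 * inverse (real (Suc k))) sequentially"
          using close by (intro eventually_sequentiallyI[of j]) simp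
      qed
    qed
  qed
qed


lemma separable_obtain_countable_pi_base:
  assumes "separable_space mtopology" "M \<noteq> {}"
  obtains U :: "nat \<Rightarrow> 'a set"
  where "\<And>j. openin mtopology (U j) \<and> U j \<noteq> {}"
    "\<And>V. openin mtopology V \<Longrightarrow> V \<noteq> {} \<Longrightarrow> \<exists>j. U j \<subseteq> V"
proof -
  obtain D where D: "countable D" "D \<subseteq> M" "mtopology closure_of D = M"
    using assms(1) unfolding separable_space_def by auto
  then have "D \<noteq> {}"
    using assms(2) by auto
  define U where "U j = mball (from_nat_into D (fst (prod_decode j))) (1 / Suc (snd (prod_decode j)))"
    for j
  show thesis
  proof (rule that)
    show "openin mtopology (U j) \<and> U j \<noteq> {}" for j
    proof -
      have "from_nat_into D (fst (prod_decode j)) \<in> M"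
        using from_nat_into[OF \<open>D \<noteq> {}\<close>] D(2) by blast
      then have "from_nat_into D (fst (prod_decode j)) \<in> U j"
        unfolding U_def by simp
      then show ?thesis
        unfolding U_def by blast
    qed
    show "\<exists>j. U j \<subseteq> V" if V: "openin mtopology V" "V \<noteq> {}" for V
    proof -
      obtain z where "z \<in> V"
        using V(2) by blast
      then have "z \<in> M"
        using openin_subset[OF V(1)] by auto
      obtain r where "0 < r" "mball z r \<subseteq> V"
        using V(1) \<open>z \<in> V\<close> unfolding openin_mtopology by blast
      obtain q where q: "inverse (real (Suc q)) < r/2"
        using reals_Archimedean[of "r/2"] \<open>0 < r\<close> by auto
      have "z \<in> mball z (r/2)"
        using \<open>z \<in> M\<close> \<open>0 < r\<close> by simp
      moreover have "D \<inter> W \<noteq> {}" if "openin mtopology W" "W \<noteq> {}" for W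
        using D(3) dense_intersects_open[of mtopology D] that by simp
      ultimately have "D \<inter> mball z (r/2) \<noteq> {}"
        by blast
      then obtain e where e: "e \<in> D" "d z e < r/2"
        by auto
      obtain a where "from_nat_into D a = e"
        using from_nat_into_surj[OF D(1) e(1)] by blast
      then have "U (prod_encode (a, q)) = mball e (1 / Suc q)"
        unfolding U_def by simp
      also have "\<dots> \<subseteq> mball z r"
      proof
        fix y assume "y \<in> mball e (1 / Suc q)"
        then have "y \<in> M" "d e y < r/2"
          using q by (auto simp: inverse_eq_divide)
        moreover have "d z y \<le> d z e + d e y"
          using \<open>z \<in> M\<close> \<open>e \<in> D\<close> D(2) \<open>y \<in> M\<close> by (intro triangle) auto
        ultimately show "y \<in> mball z r"
          using e(2) \<open>z \<in> M\<close> by simp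
      qed
      finally show ?thesis
        using \<open>mball z r \<subseteq> V\<close> by blast
    qed
  qed
qed

lemma top_quasi_rigid_wrt_obtain_quasi_rigid_subseq:
  assumes "mcomplete" "separable_space mtopology"
    and cont: "continuous_map mtopology mtopology T"
    and tqr: "top_quasi_rigid_wrt mtopology T n"
  obtains i where "strict_mono i" "quasi_rigid_wrt mtopology T (n \<circ> i)"
proof (cases "M = {}")
  case True
  then have "quasi_rigid_wrt mtopology T (n \<circ> id)"
    unfolding quasi_rigid_wrt_def topspace_mtopology by (intro exI[of _ "{}"]) simp
  then show thesis
    using that[of id] by (simp add: strict_mono_def)
next
  case False
  obtain U :: "nat \<Rightarrow> 'a set" where U: "\<And>j. openin mtopology (U j) \<and> U j \<noteq> {}"
    and pi_base: "\<And>V. openin mtopology V \<Longrightarrow> V \<noteq> {} \<Longrightarrow> \<exists>j. U j \<subseteq> V"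
    by (rule separable_obtain_countable_pi_base[OF assms(2) False]) blast
  obtain i x where "strict_mono i" and x: "\<And>j. x j \<in> U j"
    and rigid: "\<And>j. limitin mtopology (\<lambda>k. (T ^^ n (i k)) (x j)) (x j) sequentially"
    by (rule obtain_common_rigid_subsequence[where U=U, OF assms(1) cont tqr U]) blast
  have "range x \<subseteq> M"
    using x U openin_subset[of mtopology] by fastforce
  moreover have "mtopology closure_of range x = M"
    unfolding dense_intersects_open[where X=mtopology, unfolded topspace_mtopology]
  proof (intro allI impI)
    fix V assume "openin mtopology V \<and> V \<noteq> {}"
    then obtain j where "U j \<subseteq> V"
      using pi_base by blast
    then show "range x \<inter> V \<noteq> {}"
      using x[of j] by blast
  qed
  ultimately have "quasi_rigid_wrt mtopology T (n \<circ> i)"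
    unfolding quasi_rigid_wrt_def topspace_mtopology using rigid by auto
  then show thesis
    using that \<open>strict_mono i\<close> by blast
qed

end

theorem mainTheorem2:
  fixes X :: "'a topology" and T :: "'a \<Rightarrow> 'a"
  assumes "completely_metrizable_space X" and "separable_space X"
    and "continuous_map X X T"
  shows "quasi_rigid X T \<longleftrightarrow> top_quasi_rigid X T"
proof
  assume "quasi_rigid X T"
  then show "top_quasi_rigid X T"
    unfolding quasi_rigid_def top_quasi_rigid_def using quasi_rigid_wrt_imp_top_quasi_rigid_wrt by blast
next
  assume "top_quasi_rigid X T"
  then obtain n where n: "strict_mono n" "\<forall>k. 0 < n k" "top_quasi_rigid_wrt X T n"
    unfolding top_quasi_rigid_def by blast
  obtain M d where "Metric_space M d" "Metric_space.mcomplete M d" "X = Metric_space.mtopology M d"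
    using assms(1) unfolding completely_metrizable_space_def by blast
  then obtain i where "strict_mono i" "quasi_rigid_wrt X T (n \<circ> i)"
    using Metric_space.top_quasi_rigid_wrt_obtain_quasi_rigid_subseq[of M d T n] assms(2,3) n(3)
    by blast
  moreover have "strict_mono (n \<circ> i)"
    using n(1) \<open>strict_mono i\<close> by (rule strict_mono_o)
  ultimately show "quasi_rigid X T"
    unfolding quasi_rigid_def using n(2) by auto
qed

end
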